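(* Let $\Gamma$ be a graph and let $K_1,\dots,K_n$ be finitely many finite graphs. (1) If $\Gamma$ contains a finite set of vertices $X$ such that every subgraph of $\Gamma$ isomorphic to one of the $K_i$ has at least one vertex in $X$, then $\Gamma$ contains a finite set of vertices $Y$, invariant under all automorphisms of $\Gamma$, such that every subgraph of $\Gamma$ isomorphic to one of the $K_i$ has at least one vertex in $Y$, and $|Y|\le |X|\cdot\max_i(\text{number of vertices of }K_i)$. (2) If $\Gamma$ contains a finite set of edges $X$ such that every subgraph of $\Gamma$ isomorphic to one of the $K_i$ has at least one edge in $X$, then $\Gamma$ contains a finite set of edges $Y$, invariant under all automorphisms of $\Gamma$, such that every subgraph of $\Gamma$ isomorphic to one of the $K_i$ has at least one edge in $Y$, and $|Y|\le |X|\cdot\max_i(\text{number of edges of }K_i)$.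
   Context: "Graph" may be understood in any of the usual senses (directed, undirected, or mixed; multiple edges and/or loops allowed or not), fixed throughout; isomorphisms and automorphisms preserve the corresponding structure. "Subgraph" means an arbitrary (not necessarily induced) subgraph. $\Gamma$ may be infinite. *)

theory Defs
  imports Main
begin

text \<open>Graphs are taken in the sense of directed multigraphs with loops allowed:
  a vertex set, an edge set, and source/target maps (only meaningful on edges).\<close>

record ('v, 'e) graph =
  verts :: "'v set"
  edges :: "'e set"
  src :: "'e \<Rightarrow> 'v"
  tgt :: "'e \<Rightarrow> 'v"

definition wf_graph :: "('v, 'e) graph \<Rightarrow> bool" where
  "wf_graph G \<longleftrightarrow> (\<forall>e\<in>edges G. src G e \<in> verts G \<and> tgt G e \<in> verts G)"

definition finite_graph :: "('v, 'e) graph \<Rightarrow> bool" where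
  "finite_graph G \<longleftrightarrow> wf_graph G \<and> finite (verts G) \<and> finite (edges G)"

definition subgraph :: "('v, 'e) graph \<Rightarrow> ('v, 'e) graph \<Rightarrow> bool" where
  "subgraph H G \<longleftrightarrow> wf_graph H \<and> verts H \<subseteq> verts G \<and> edges H \<subseteq> edges G \<and>
     (\<forall>e\<in>edges H. src H e = src G e \<and> tgt H e = tgt G e)"

definition graph_iso_via ::
  "('v \<Rightarrow> 'w) \<Rightarrow> ('e \<Rightarrow> 'f) \<Rightarrow> ('v, 'e) graph \<Rightarrow> ('w, 'f) graph \<Rightarrow> bool" where
  "graph_iso_via f g G H \<longleftrightarrow>
     bij_betw f (verts G) (verts H) \<and> bij_betw g (edges G) (edges H) \<and>
     (\<forall>e\<in>edges G. f (src G e) = src H (g e) \<and> f (tgt G e) = tgt H (g e))"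

definition isomorphic :: "('v, 'e) graph \<Rightarrow> ('w, 'f) graph \<Rightarrow> bool" where
  "isomorphic G H \<longleftrightarrow> (\<exists>f g. graph_iso_via f g G H)"

definition automorphism :: "('v, 'e) graph \<Rightarrow> ('v \<Rightarrow> 'v) \<Rightarrow> ('e \<Rightarrow> 'e) \<Rightarrow> bool" where
  "automorphism G f g \<longleftrightarrow> graph_iso_via f g G G"

definition aut_invariant_verts :: "('v, 'e) graph \<Rightarrow> 'v set \<Rightarrow> bool" where
  "aut_invariant_verts G Y \<longleftrightarrow> (\<forall>f g. automorphism G f g \<longrightarrow> f ` Y = Y)"

definition aut_invariant_edges :: "('v, 'e) graph \<Rightarrow> 'e set \<Rightarrow> bool" where
  "aut_invariant_edges G Y \<longleftrightarrow> (\<forall>f g. automorphism G f g \<longrightarrow> g ` Y = Y)"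

end

(* The copies of the K\<^sub>i in \<Gamma> form a hypergraph whose hyperedges (their vertex or
   edge sets) have at most r elements, and which every automorphism of \<Gamma> permutes.  It has only
   finitely many minimum transversals, each of size \<tau> \<le> |X|, and the automorphisms permute these
   too.  Every hyperedge E meets all of them, so some point of E lies in at least a 1/r fraction of
   the minimum transversals.  Hence the set Y of all such frequent points is an
   automorphism-invariant transversal, and double counting the incidences between Y and the
   minimum transversals gives |Y| \<le> r \<tau> \<le> r |X|. *)

theory Submission
  imports Defs
begin

section \<open>Invariant transversals of hypergraphs\<close>

definition transversal :: "'a set set \<Rightarrow> 'a set \<Rightarrow> bool" where
  "transversal \<E> X \<longleftrightarrow> (\<forall>E\<in>\<E>. E \<inter> X \<noteq> {})"

definition minimal_transversal :: "'a set set \<Rightarrow> 'a set \<Rightarrow> bool" where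
  "minimal_transversal \<E> X \<longleftrightarrow> transversal \<E> X \<and> (\<forall>Z\<subset>X. \<not> transversal \<E> Z)"

definition min_transversals :: "'a set set \<Rightarrow> 'a set set" where
  "min_transversals \<E> =
     {X. finite X \<and> transversal \<E> X \<and> (\<forall>Z. finite Z \<and> transversal \<E> Z \<longrightarrow> card X \<le> card Z)}"

definition frequent_points :: "nat \<Rightarrow> 'a set set \<Rightarrow> 'a set" where
  "frequent_points r \<T> = {v \<in> \<Union>\<T>. card \<T> \<le> r * card {X\<in>\<T>. v \<in> X}}"

lemma transversal_image:
  assumes "transversal \<E> X" "image f ` \<E> = \<E>"
  shows "transversal \<E> (f ` X)"
  unfolding transversal_def
proof
  fix E assume "E \<in> \<E>"
  then obtain E' where "E' \<in> \<E>" "E = f ` E'" using assms(2) by blast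
  then show "E \<inter> f ` X \<noteq> {}" using assms(1) unfolding transversal_def by blast
qed

lemma minimal_transversal_remove:
  assumes "minimal_transversal \<E> X" "v \<in> X"
  shows "minimal_transversal {E\<in>\<E>. v \<notin> E} (X - {v})"
  unfolding minimal_transversal_def
proof (intro conjI allI impI notI)
  show "transversal {E\<in>\<E>. v \<notin> E} (X - {v})"
    using assms(1) unfolding minimal_transversal_def transversal_def by blast
  fix Z assume "Z \<subset> X - {v}" "transversal {E\<in>\<E>. v \<notin> E} Z"
  then have "insert v Z \<subset> X" "transversal \<E> (insert v Z)"
    using assms(2) unfolding transversal_def by blast+
  then show False using assms(1) unfolding minimal_transversal_def by blast
qed

text \<open>A minimal transversal meets a fixed hyperedge E in some v, and removing v leaves a
  minimal transversal of the hyperedges avoiding v; so there are at most |E| times as many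
  minimal transversals of size k + 1 as there are of size k.\<close>
lemma finite_minimal_transversals:
  assumes "\<forall>E\<in>\<E>. finite E"
  shows "finite {X. finite X \<and> card X \<le> k \<and> minimal_transversal \<E> X}"
  using assms
proof (induction k arbitrary: \<E>)
  case 0
  show ?case
    by (rule finite_subset[of _ "{{}}"]) auto
next
  case (Suc k)
  show ?case
  proof (cases "\<E> = {}")
    case True
    then have "{X. finite X \<and> card X \<le> Suc k \<and> minimal_transversal \<E> X} \<subseteq> {{}}"
      unfolding minimal_transversal_def transversal_def by blast
    then show ?thesis by (rule finite_subset) simp
  next
    case False
    then obtain E where E: "E \<in> \<E>" by blast
    let ?M = "\<lambda>\<E>' k. {X. finite X \<and> card X \<le> k \<and> minimal_transversal \<E>' X}"
    have "?M \<E> (Suc k) \<subseteq> (\<Union>v\<in>E. insert v ` ?M {E'\<in>\<E>. v \<notin> E'} k)"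
    proof
      fix X assume X: "X \<in> ?M \<E> (Suc k)"
      then obtain v where v: "v \<in> E" "v \<in> X"
        using E unfolding minimal_transversal_def transversal_def by blast
      then have "X - {v} \<in> ?M {E'\<in>\<E>. v \<notin> E'} k"
        using X minimal_transversal_remove by fastforce
      moreover have "X = insert v (X - {v})" using v by blast
      ultimately show "X \<in> (\<Union>v\<in>E. insert v ` ?M {E'\<in>\<E>. v \<notin> E'} k)" using v by blast
    qed
    moreover have "finite (\<Union>v\<in>E. insert v ` ?M {E'\<in>\<E>. v \<notin> E'} k)"
      using Suc E by auto
    ultimately show ?thesis by (rule finite_subset)
  qed
qed

lemma min_transversals_minimal:
  assumes "X \<in> min_transversals \<E>"
  shows "minimal_transversal \<E> X"
  unfolding minimal_transversal_def
proof (intro conjI allI impI notI)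
  have X: "finite X" "transversal \<E> X"
    "\<And>Z. finite Z \<Longrightarrow> transversal \<E> Z \<Longrightarrow> card X \<le> card Z"
    using assms unfolding min_transversals_def by auto
  then show "transversal \<E> X" by blast
  fix Z assume "Z \<subset> X" "transversal \<E> Z"
  then show False
    using X psubset_card_mono[of X Z] finite_subset[of Z X] by fastforce
qed

lemma min_transversals_subset:
  assumes "X \<in> min_transversals \<E>"
  shows "X \<subseteq> \<Union>\<E>"
proof -
  have "transversal \<E> (X \<inter> \<Union>\<E>)"
    using assms unfolding min_transversals_def transversal_def by blast
  then have "\<not> X \<inter> \<Union>\<E> \<subset> X"
    using min_transversals_minimal[OF assms] unfolding minimal_transversal_def by blast
  then show ?thesis by blast
qed

lemma min_transversals_nonempty:
  assumes "finite X" "transversal \<E> X"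
  shows "min_transversals \<E> \<noteq> {}"
proof -
  obtain Z where "finite Z \<and> transversal \<E> Z"
      "\<forall>Z'. finite Z' \<and> transversal \<E> Z' \<longrightarrow> card Z \<le> card Z'"
    using ex_has_least_nat[of "\<lambda>Z. finite Z \<and> transversal \<E> Z" X card] assms by blast
  then show ?thesis unfolding min_transversals_def by blast
qed

lemma finite_min_transversals:
  assumes "\<forall>E\<in>\<E>. finite E"
  shows "finite (min_transversals \<E>)"
proof (cases "min_transversals \<E> = {}")
  case False
  then obtain X where X: "X \<in> min_transversals \<E>" by blast
  have "Z \<in> {Z. finite Z \<and> card Z \<le> card X \<and> minimal_transversal \<E> Z}"
    if Z: "Z \<in> min_transversals \<E>" for Z
    using X Z min_transversals_minimal[OF Z] unfolding min_transversals_def by auto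
  then have "min_transversals \<E> \<subseteq> {Z. finite Z \<and> card Z \<le> card X \<and> minimal_transversal \<E> Z}"
    by blast
  then show ?thesis using finite_minimal_transversals[OF assms] by (rule finite_subset)
qed simp

lemma image_min_transversals:
  assumes "\<forall>E\<in>\<E>. finite E" "inj_on f (\<Union>\<E>)" "image f ` \<E> = \<E>"
  shows "image f ` min_transversals \<E> = min_transversals \<E>"
proof (rule endo_inj_surj)
  show "finite (min_transversals \<E>)" using assms(1) by (rule finite_min_transversals)
  have "\<Union>(min_transversals \<E>) \<subseteq> \<Union>\<E>" using min_transversals_subset by blast
  then show "inj_on (image f) (min_transversals \<E>)"
    by (intro inj_on_image inj_on_subset[OF assms(2)])
  show "image f ` min_transversals \<E> \<subseteq> min_transversals \<E>"
  proof clarify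
    fix X assume X: "X \<in> min_transversals \<E>"
    have "card (f ` X) = card X"
      using inj_on_subset[OF assms(2) min_transversals_subset[OF X]] by (rule card_image)
    then show "f ` X \<in> min_transversals \<E>"
      using X transversal_image[OF _ assms(3)] unfolding min_transversals_def by auto
  qed
qed

lemma sum_card_incidences:
  assumes "finite A" "finite \<T>"
  shows "(\<Sum>v\<in>A. card {X\<in>\<T>. v \<in> X}) = (\<Sum>X\<in>\<T>. card (A \<inter> X))"
proof -
  have "(\<Sum>v\<in>A. card {X\<in>\<T>. v \<in> X}) = (\<Sum>v\<in>A. \<Sum>X\<in>\<T>. if v \<in> X then 1 else 0)"
    using assms(2) by (auto simp: sum.If_cases intro!: sum.cong arg_cong[where f = card])
  also have "\<dots> = (\<Sum>X\<in>\<T>. \<Sum>v\<in>A. if v \<in> X then 1 else 0)" by (rule sum.swap)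
  also have "\<dots> = (\<Sum>X\<in>\<T>. card (A \<inter> X))" using assms(1) by (simp add: sum.If_cases Int_def)
  finally show ?thesis .
qed

lemma finite_frequent_points:
  assumes "finite \<T>" "\<forall>X\<in>\<T>. finite X"
  shows "finite (frequent_points r \<T>)"
  using assms unfolding frequent_points_def by auto

lemma frequent_points_transversal:
  assumes "finite \<T>" "\<T> \<noteq> {}" "\<forall>X\<in>\<T>. transversal \<E> X" "\<forall>E\<in>\<E>. finite E \<and> card E \<le> r"
  shows "transversal \<E> (frequent_points r \<T>)"
  unfolding transversal_def
proof (intro ballI notI)
  fix E assume E: "E \<in> \<E>" and disjoint: "E \<inter> frequent_points r \<T> = {}"
  let ?c = "\<lambda>v. card {X\<in>\<T>. v \<in> X}"
  have "finite E" "card E \<le> r" using assms(4) E by auto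
  have "E \<noteq> {}" using assms(2,3) E unfolding transversal_def by blast
  have rare: "r * ?c v < card \<T>" if "v \<in> E" for v
  proof (cases "v \<in> \<Union>\<T>")
    case True
    moreover have "v \<notin> frequent_points r \<T>" using disjoint that by blast
    ultimately show ?thesis unfolding frequent_points_def by simp
  next
    case False
    then have "{X\<in>\<T>. v \<in> X} = {}" by blast
    then have "r * ?c v = 0" by (simp only: card.empty mult_0_right)
    moreover have "0 < card \<T>" using assms(1,2) by (simp add: card_gt_0_iff)
    ultimately show ?thesis by linarith
  qed
  have "1 \<le> card (E \<inter> X)" if "X \<in> \<T>" for X
  proof -
    have "E \<inter> X \<noteq> {}" using assms(3) E that unfolding transversal_def by blast
    then show ?thesis using \<open>finite E\<close> by (simp add: Suc_le_eq card_gt_0_iff)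
  qed
  then have "(\<Sum>X\<in>\<T>. 1) \<le> (\<Sum>X\<in>\<T>. card (E \<inter> X))" by (rule sum_mono)
  also have "\<dots> = (\<Sum>v\<in>E. ?c v)" using sum_card_incidences[OF \<open>finite E\<close> assms(1)] by simp
  finally have "r * card \<T> \<le> r * (\<Sum>v\<in>E. ?c v)" by simp
  also have "\<dots> = (\<Sum>v\<in>E. r * ?c v)" by (simp add: sum_distrib_left)
  also have "\<dots> < (\<Sum>v\<in>E. card \<T>)" using sum_strict_mono[OF \<open>finite E\<close> \<open>E \<noteq> {}\<close> rare] .
  also have "\<dots> \<le> r * card \<T>" using \<open>card E \<le> r\<close> by simp
  finally show False by simp
qed

lemma card_frequent_points_le:
  assumes "finite \<T>" "\<forall>X\<in>\<T>. finite X \<and> card X \<le> k"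
  shows "card (frequent_points r \<T>) \<le> r * k"
proof (cases "\<T> = {}")
  case False
  let ?Y = "frequent_points r \<T>"
  have "finite ?Y" using assms finite_frequent_points by blast
  have "card ?Y * card \<T> = (\<Sum>v\<in>?Y. card \<T>)" by simp
  also have "\<dots> \<le> (\<Sum>v\<in>?Y. r * card {X\<in>\<T>. v \<in> X})"
    by (rule sum_mono) (simp add: frequent_points_def)
  also have "\<dots> = r * (\<Sum>v\<in>?Y. card {X\<in>\<T>. v \<in> X})" by (simp add: sum_distrib_left)
  also have "\<dots> = r * (\<Sum>X\<in>\<T>. card (?Y \<inter> X))"
    using sum_card_incidences[OF \<open>finite ?Y\<close> assms(1)] by simp
  also have "\<dots> \<le> r * (\<Sum>X\<in>\<T>. k)"
  proof -
    have "card (?Y \<inter> X) \<le> k" if "X \<in> \<T>" for X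
      using assms(2) that card_mono[of X "?Y \<inter> X"] by fastforce
    then have "(\<Sum>X\<in>\<T>. card (?Y \<inter> X)) \<le> (\<Sum>X\<in>\<T>. k)" by (rule sum_mono)
    then show ?thesis by (rule mult_left_mono) simp
  qed
  also have "\<dots> = r * k * card \<T>" by simp
  finally show ?thesis using assms(1) False by (simp add: card_gt_0_iff)
qed (simp add: frequent_points_def)

lemma image_frequent_points:
  assumes inj: "inj_on f (\<Union>\<T>)" and perm: "image f ` \<T> = \<T>"
  shows "f ` frequent_points r \<T> = frequent_points r \<T>"
proof -
  let ?c = "\<lambda>v. card {X\<in>\<T>. v \<in> X}"
  have c_image: "?c (f v) = ?c v" if v: "v \<in> \<Union>\<T>" for v
  proof -
    have "{X\<in>\<T>. f v \<in> X} = image f ` {X\<in>\<T>. v \<in> X}"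
    proof (intro equalityI subsetI)
      fix X assume "X \<in> {X\<in>\<T>. f v \<in> X}"
      moreover obtain X' where "X' \<in> \<T>" "X = f ` X'" using calculation perm by blast
      ultimately show "X \<in> image f ` {X\<in>\<T>. v \<in> X}"
        using inj_on_image_mem_iff[OF inj v] by blast
    qed (use perm in blast)
    moreover have "inj_on (image f) {X\<in>\<T>. v \<in> X}"
      by (rule inj_on_image, rule inj_on_subset[OF inj]) blast
    ultimately show ?thesis by (simp add: card_image)
  qed
  have Union: "f ` \<Union>\<T> = \<Union>\<T>" using perm by (metis image_Union)
  show ?thesis
  proof (intro equalityI subsetI)
    fix w assume "w \<in> f ` frequent_points r \<T>"
    then obtain v where v: "v \<in> frequent_points r \<T>" "w = f v" by blast
    then have "v \<in> \<Union>\<T>" unfolding frequent_points_def by blast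
    then show "w \<in> frequent_points r \<T>"
      using v Union c_image unfolding frequent_points_def by auto
  next
    fix w assume w: "w \<in> frequent_points r \<T>"
    then obtain v where "v \<in> \<Union>\<T>" "w = f v" using Union unfolding frequent_points_def by blast
    then show "w \<in> f ` frequent_points r \<T>"
      using w c_image unfolding frequent_points_def by auto
  qed
qed

lemma invariant_transversal:
  assumes "\<forall>E\<in>\<E>. finite E \<and> card E \<le> r" "finite X" "transversal \<E> X"
  obtains Y where "Y \<subseteq> \<Union>\<E>" "finite Y" "transversal \<E> Y" "card Y \<le> card X * r"
    "\<And>f. inj_on f (\<Union>\<E>) \<Longrightarrow> image f ` \<E> = \<E> \<Longrightarrow> f ` Y = Y"
proof -
  let ?\<T> = "min_transversals \<E>"
  have finite_edges: "\<forall>E\<in>\<E>. finite E" using assms(1) by blast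
  have fin: "finite ?\<T>" using finite_edges by (rule finite_min_transversals)
  have members: "\<forall>X'\<in>?\<T>. finite X' \<and> transversal \<E> X' \<and> card X' \<le> card X"
    using assms(2,3) unfolding min_transversals_def by blast
  have sub: "\<Union>?\<T> \<subseteq> \<Union>\<E>" using min_transversals_subset by blast
  show thesis
  proof (rule that[of "frequent_points r ?\<T>"])
    show "frequent_points r ?\<T> \<subseteq> \<Union>\<E>" using sub unfolding frequent_points_def by blast
    show "finite (frequent_points r ?\<T>)" using fin members finite_frequent_points by blast
    show "transversal \<E> (frequent_points r ?\<T>)"
      using frequent_points_transversal[OF fin min_transversals_nonempty[OF assms(2,3)]]
        members assms(1)
      by blast
    show "card (frequent_points r ?\<T>) \<le> card X * r"
      using card_frequent_points_le[OF fin, of "card X" r] members by (simp add: mult.commute)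
    fix f assume inj: "inj_on f (\<Union>\<E>)" and perm: "image f ` \<E> = \<E>"
    have "inj_on f (\<Union>?\<T>)" using inj sub by (rule inj_on_subset)
    then show "f ` frequent_points r ?\<T> = frequent_points r ?\<T>"
      using image_min_transversals[OF finite_edges inj perm] by (rule image_frequent_points)
  qed
qed

section \<open>Automorphisms permute the copies of a graph\<close>

lemma graph_iso_via_inv:
  assumes "graph_iso_via f g A B" "wf_graph A"
  shows "graph_iso_via (inv_into (verts A) f) (inv_into (edges A) g) B A"
  unfolding graph_iso_via_def
proof (intro conjI ballI)
  have bf: "bij_betw f (verts A) (verts B)" and bg: "bij_betw g (edges A) (edges B)"
    using assms(1) unfolding graph_iso_via_def by auto
  then show "bij_betw (inv_into (verts A) f) (verts B) (verts A)"
    and "bij_betw (inv_into (edges A) g) (edges B) (edges A)"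
    by (simp_all add: bij_betw_inv_into)
  fix e' assume "e' \<in> edges B"
  define e where "e = inv_into (edges A) g e'"
  have e: "e \<in> edges A" "g e = e'"
    using \<open>e' \<in> edges B\<close> bg unfolding e_def by (auto simp: bij_betw_def inv_into_into f_inv_into_f)
  then have "f (src A e) = src B e'" "f (tgt A e) = tgt B e'"
    using assms(1) unfolding graph_iso_via_def by auto
  moreover have "src A e \<in> verts A" "tgt A e \<in> verts A"
    using assms(2) e unfolding wf_graph_def by auto
  moreover have "inj_on f (verts A)" using bf by (simp add: bij_betw_def)
  ultimately show "inv_into (verts A) f (src B e') = src A (inv_into (edges A) g e')"
    and "inv_into (verts A) f (tgt B e') = tgt A (inv_into (edges A) g e')"
    unfolding e_def[symmetric] by (metis inv_into_f_f)+
qed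

lemma graph_iso_via_comp:
  assumes "graph_iso_via f1 g1 A B" "graph_iso_via f2 g2 B C"
  shows "graph_iso_via (f2 \<circ> f1) (g2 \<circ> g1) A C"
proof -
  have "bij_betw (f2 \<circ> f1) (verts A) (verts C)" "bij_betw (g2 \<circ> g1) (edges A) (edges C)"
    using assms unfolding graph_iso_via_def by (auto intro: bij_betw_trans)
  moreover have "\<forall>e\<in>edges A. (f2 \<circ> f1) (src A e) = src C ((g2 \<circ> g1) e) \<and>
      (f2 \<circ> f1) (tgt A e) = tgt C ((g2 \<circ> g1) e)"
    using assms unfolding graph_iso_via_def bij_betw_def by auto
  ultimately show ?thesis unfolding graph_iso_via_def by blast
qed

lemma automorphism_inv:
  assumes "automorphism \<Gamma> f g" "wf_graph \<Gamma>"
  shows "automorphism \<Gamma> (inv_into (verts \<Gamma>) f) (inv_into (edges \<Gamma>) g)"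
  using graph_iso_via_inv assms unfolding automorphism_def by blast

lemma isomorphic_card:
  assumes "isomorphic H K"
  shows "card (verts H) = card (verts K)" "card (edges H) = card (edges K)"
    "finite (verts H) \<longleftrightarrow> finite (verts K)" "finite (edges H) \<longleftrightarrow> finite (edges K)"
  using assms unfolding isomorphic_def graph_iso_via_def
  by (auto simp: bij_betw_same_card bij_betw_finite)

definition copies :: "('v, 'e) graph \<Rightarrow> ('w, 'f) graph set \<Rightarrow> ('v, 'e) graph set" where
  "copies \<Gamma> \<K> = {H. subgraph H \<Gamma> \<and> (\<exists>K\<in>\<K>. isomorphic H K)}"

definition subgraph_image ::
  "('v, 'e) graph \<Rightarrow> ('v \<Rightarrow> 'v) \<Rightarrow> ('e \<Rightarrow> 'e) \<Rightarrow> ('v, 'e) graph \<Rightarrow> ('v, 'e) graph" where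
  "subgraph_image \<Gamma> f g H = \<lparr>verts = f ` verts H, edges = g ` edges H, src = src \<Gamma>, tgt = tgt \<Gamma>\<rparr>"

lemma verts_subgraph_image [simp]: "verts (subgraph_image \<Gamma> f g H) = f ` verts H"
  and edges_subgraph_image [simp]: "edges (subgraph_image \<Gamma> f g H) = g ` edges H"
  by (simp_all add: subgraph_image_def)

lemma automorphism_subgraph_image:
  assumes aut: "automorphism \<Gamma> f g" and sub: "subgraph H \<Gamma>"
  shows "subgraph (subgraph_image \<Gamma> f g H) \<Gamma>" "graph_iso_via f g H (subgraph_image \<Gamma> f g H)"
proof -
  have bij: "bij_betw f (verts \<Gamma>) (verts \<Gamma>)" "bij_betw g (edges \<Gamma>) (edges \<Gamma>)"
    and ends: "\<forall>e\<in>edges \<Gamma>. f (src \<Gamma> e) = src \<Gamma> (g e) \<and> f (tgt \<Gamma> e) = tgt \<Gamma> (g e)"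
    using aut unfolding automorphism_def graph_iso_via_def by auto
  have H: "\<forall>e\<in>edges H. src H e \<in> verts H \<and> tgt H e \<in> verts H"
    "verts H \<subseteq> verts \<Gamma>" "edges H \<subseteq> edges \<Gamma>"
    "\<forall>e\<in>edges H. src H e = src \<Gamma> e \<and> tgt H e = tgt \<Gamma> e"
    using sub unfolding subgraph_def wf_graph_def by auto
  have moved_ends: "src \<Gamma> (g e) = f (src H e)" "tgt \<Gamma> (g e) = f (tgt H e)" if "e \<in> edges H" for e
    using that ends H(3,4) by auto
  have "wf_graph (subgraph_image \<Gamma> f g H)"
    using H(1) moved_ends unfolding wf_graph_def by (auto simp: subgraph_image_def)
  moreover have "f ` verts H \<subseteq> verts \<Gamma>" "g ` edges H \<subseteq> edges \<Gamma>"
    using H(2,3) bij bij_betw_imp_surj_on image_mono by metis+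
  ultimately show "subgraph (subgraph_image \<Gamma> f g H) \<Gamma>"
    unfolding subgraph_def by (simp add: subgraph_image_def)
  have "inj_on f (verts H)" "inj_on g (edges H)"
    using H(2,3) bij unfolding bij_betw_def by (auto intro: inj_on_subset)
  then show "graph_iso_via f g H (subgraph_image \<Gamma> f g H)"
    unfolding graph_iso_via_def using moved_ends
    by (simp add: subgraph_image_def inj_on_imp_bij_betw)
qed

lemma automorphism_image_copy:
  assumes aut: "automorphism \<Gamma> f g" and "wf_graph \<Gamma>" and H: "H \<in> copies \<Gamma> \<K>"
  shows "subgraph_image \<Gamma> f g H \<in> copies \<Gamma> \<K>"
proof -
  obtain K f1 g1 where "K \<in> \<K>" and iso: "graph_iso_via f1 g1 H K" and sub: "subgraph H \<Gamma>"
    using H unfolding copies_def isomorphic_def by blast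
  have "wf_graph H" using sub unfolding subgraph_def by blast
  then have "isomorphic (subgraph_image \<Gamma> f g H) K"
    using graph_iso_via_comp[OF graph_iso_via_inv iso] automorphism_subgraph_image(2)[OF aut sub]
    unfolding isomorphic_def by blast
  then show ?thesis
    using \<open>K \<in> \<K>\<close> automorphism_subgraph_image(1)[OF aut sub] unfolding copies_def by blast
qed

lemma image_family_eqI:
  assumes "\<And>A. A \<in> \<A> \<Longrightarrow> h ` A \<in> \<A> \<and> h' ` A \<in> \<A> \<and> h ` h' ` A = A"
  shows "image h ` \<A> = \<A>"
proof
  show "image h ` \<A> \<subseteq> \<A>" using assms by blast
  show "\<A> \<subseteq> image h ` \<A>"
  proof
    fix A assume "A \<in> \<A>"
    then have "A = h ` h' ` A" "h' ` A \<in> \<A>" using assms by auto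
    then show "A \<in> image h ` \<A>" by blast
  qed
qed

lemma automorphism_permutes_copies:
  assumes aut: "automorphism \<Gamma> f g" and wf: "wf_graph \<Gamma>"
  shows "image f ` verts ` copies \<Gamma> \<K> = verts ` copies \<Gamma> \<K>"
    and "image g ` edges ` copies \<Gamma> \<K> = edges ` copies \<Gamma> \<K>"
proof -
  let ?C = "copies \<Gamma> \<K>"
  let ?f' = "inv_into (verts \<Gamma>) f" and ?g' = "inv_into (edges \<Gamma>) g"
  have aut': "automorphism \<Gamma> ?f' ?g'" using aut wf by (rule automorphism_inv)
  have onto: "f ` verts \<Gamma> = verts \<Gamma>" "g ` edges \<Gamma> = edges \<Gamma>"
    using aut unfolding automorphism_def graph_iso_via_def by (simp_all add: bij_betw_imp_surj_on)
  have inside: "verts H \<subseteq> verts \<Gamma>" "edges H \<subseteq> edges \<Gamma>" if "H \<in> ?C" for H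
    using that unfolding copies_def subgraph_def by blast+
  note images = automorphism_image_copy[OF aut wf] automorphism_image_copy[OF aut' wf]
  have "f ` A \<in> verts ` ?C \<and> ?f' ` A \<in> verts ` ?C \<and> f ` ?f' ` A = A"
    if A: "A \<in> verts ` ?C" for A
  proof -
    obtain H where H: "H \<in> ?C" "A = verts H" using A by blast
    have "verts (subgraph_image \<Gamma> f g H) \<in> verts ` ?C"
      "verts (subgraph_image \<Gamma> ?f' ?g' H) \<in> verts ` ?C"
      using images[OF H(1)] by blast+
    then show ?thesis using image_inv_into_cancel[OF onto(1) inside(1)[OF H(1)]] H(2) by simp
  qed
  then show "image f ` verts ` ?C = verts ` ?C" by (rule image_family_eqI)
  have "g ` A \<in> edges ` ?C \<and> ?g' ` A \<in> edges ` ?C \<and> g ` ?g' ` A = A"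
    if A: "A \<in> edges ` ?C" for A
  proof -
    obtain H where H: "H \<in> ?C" "A = edges H" using A by blast
    have "edges (subgraph_image \<Gamma> f g H) \<in> edges ` ?C"
      "edges (subgraph_image \<Gamma> ?f' ?g' H) \<in> edges ` ?C"
      using images[OF H(1)] by blast+
    then show ?thesis using image_inv_into_cancel[OF onto(2) inside(2)[OF H(1)]] H(2) by simp
  qed
  then show "image g ` edges ` ?C = edges ` ?C" by (rule image_family_eqI)
qed

lemma invariant_vertex_transversal:
  fixes \<Gamma> :: "('v, 'e) graph" and \<K> :: "('w, 'f) graph set"
  assumes wf: "wf_graph \<Gamma>" and small: "\<forall>K\<in>\<K>. finite (verts K) \<and> card (verts K) \<le> r"
    and X: "finite X" "transversal (verts ` copies \<Gamma> \<K>) X"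
  shows "\<exists>Y. Y \<subseteq> verts \<Gamma> \<and> finite Y \<and> aut_invariant_verts \<Gamma> Y \<and>
    transversal (verts ` copies \<Gamma> \<K>) Y \<and> card Y \<le> card X * r"
proof -
  let ?\<E> = "verts ` copies \<Gamma> \<K>"
  have small_edges: "\<forall>E\<in>?\<E>. finite E \<and> card E \<le> r"
  proof
    fix E assume "E \<in> ?\<E>"
    then obtain H :: "('v, 'e) graph" and K :: "('w, 'f) graph"
      where "E = verts H" "K \<in> \<K>" "isomorphic H K"
      unfolding copies_def by blast
    then show "finite E \<and> card E \<le> r" using small isomorphic_card[of H K] by simp
  qed
  obtain Y where Y: "Y \<subseteq> \<Union>?\<E>" "finite Y" "transversal ?\<E> Y" "card Y \<le> card X * r"
    and invariant: "\<And>f. inj_on f (\<Union>?\<E>) \<Longrightarrow> image f ` ?\<E> = ?\<E> \<Longrightarrow> f ` Y = Y"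
    using invariant_transversal[OF small_edges X] by metis
  have inside: "\<Union>?\<E> \<subseteq> verts \<Gamma>" unfolding copies_def subgraph_def by blast
  have "aut_invariant_verts \<Gamma> Y" unfolding aut_invariant_verts_def
  proof (intro allI impI)
    fix f g assume aut: "automorphism \<Gamma> f g"
    then have "inj_on f (verts \<Gamma>)"
      unfolding automorphism_def graph_iso_via_def bij_betw_def by blast
    then have "inj_on f (\<Union>?\<E>)" using inside by (rule inj_on_subset)
    then show "f ` Y = Y" using automorphism_permutes_copies(1)[OF aut wf] by (rule invariant)
  qed
  then show ?thesis using Y(2-4) subset_trans[OF Y(1) inside] by blast
qed

lemma invariant_edge_transversal:
  fixes \<Gamma> :: "('v, 'e) graph" and \<K> :: "('w, 'f) graph set"
  assumes wf: "wf_graph \<Gamma>" and small: "\<forall>K\<in>\<K>. finite (edges K) \<and> card (edges K) \<le> r"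
    and X: "finite X" "transversal (edges ` copies \<Gamma> \<K>) X"
  shows "\<exists>Y. Y \<subseteq> edges \<Gamma> \<and> finite Y \<and> aut_invariant_edges \<Gamma> Y \<and>
    transversal (edges ` copies \<Gamma> \<K>) Y \<and> card Y \<le> card X * r"
proof -
  let ?\<E> = "edges ` copies \<Gamma> \<K>"
  have small_edges: "\<forall>E\<in>?\<E>. finite E \<and> card E \<le> r"
  proof
    fix E assume "E \<in> ?\<E>"
    then obtain H :: "('v, 'e) graph" and K :: "('w, 'f) graph"
      where "E = edges H" "K \<in> \<K>" "isomorphic H K"
      unfolding copies_def by blast
    then show "finite E \<and> card E \<le> r" using small isomorphic_card[of H K] by simp
  qed
  obtain Y where Y: "Y \<subseteq> \<Union>?\<E>" "finite Y" "transversal ?\<E> Y" "card Y \<le> card X * r"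
    and invariant: "\<And>g. inj_on g (\<Union>?\<E>) \<Longrightarrow> image g ` ?\<E> = ?\<E> \<Longrightarrow> g ` Y = Y"
    using invariant_transversal[OF small_edges X] by metis
  have inside: "\<Union>?\<E> \<subseteq> edges \<Gamma>" unfolding copies_def subgraph_def by blast
  have "aut_invariant_edges \<Gamma> Y" unfolding aut_invariant_edges_def
  proof (intro allI impI)
    fix f g assume aut: "automorphism \<Gamma> f g"
    then have "inj_on g (edges \<Gamma>)"
      unfolding automorphism_def graph_iso_via_def bij_betw_def by blast
    then have "inj_on g (\<Union>?\<E>)" using inside by (rule inj_on_subset)
    then show "g ` Y = Y" using automorphism_permutes_copies(2)[OF aut wf] by (rule invariant)
  qed
  then show ?thesis using Y(2-4) subset_trans[OF Y(1) inside] by blast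
qed

theorem mainTheorem3:
  fixes \<Gamma> :: "('v, 'e) graph"
    and K :: "nat \<Rightarrow> ('w, 'f) graph"
    and n :: nat
  assumes "wf_graph \<Gamma>"
    and "\<forall>i<n. finite_graph (K i)"
  shows
    "(\<forall>X. X \<subseteq> verts \<Gamma> \<and> finite X \<and>
         (\<forall>H i. subgraph H \<Gamma> \<and> i < n \<and> isomorphic H (K i) \<longrightarrow> verts H \<inter> X \<noteq> {})
      \<longrightarrow> (\<exists>Y. Y \<subseteq> verts \<Gamma> \<and> finite Y \<and> aut_invariant_verts \<Gamma> Y \<and>
             (\<forall>H i. subgraph H \<Gamma> \<and> i < n \<and> isomorphic H (K i) \<longrightarrow> verts H \<inter> Y \<noteq> {}) \<and>
             card Y \<le> card X * (MAX i\<in>{..<n}. card (verts (K i)))))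
     \<and>
     (\<forall>X. X \<subseteq> edges \<Gamma> \<and> finite X \<and>
         (\<forall>H i. subgraph H \<Gamma> \<and> i < n \<and> isomorphic H (K i) \<longrightarrow> edges H \<inter> X \<noteq> {})
      \<longrightarrow> (\<exists>Y. Y \<subseteq> edges \<Gamma> \<and> finite Y \<and> aut_invariant_edges \<Gamma> Y \<and>
             (\<forall>H i. subgraph H \<Gamma> \<and> i < n \<and> isomorphic H (K i) \<longrightarrow> edges H \<inter> Y \<noteq> {}) \<and>
             card Y \<le> card X * (MAX i\<in>{..<n}. card (edges (K i)))))"
proof -
  let ?\<K> = "K ` {..<n}"
  have vertex_hits: "transversal (verts ` copies \<Gamma> ?\<K>) X \<longleftrightarrow>
      (\<forall>H i. subgraph H \<Gamma> \<and> i < n \<and> isomorphic H (K i) \<longrightarrow> verts H \<inter> X \<noteq> {})" for X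
    unfolding transversal_def copies_def by blast
  have edge_hits: "transversal (edges ` copies \<Gamma> ?\<K>) X \<longleftrightarrow>
      (\<forall>H i. subgraph H \<Gamma> \<and> i < n \<and> isomorphic H (K i) \<longrightarrow> edges H \<inter> X \<noteq> {})" for X
    unfolding transversal_def copies_def by blast
  have "(MAX i\<in>{..<n}. card (verts (K i))) \<ge> card (verts (K i))"
    "(MAX i\<in>{..<n}. card (edges (K i))) \<ge> card (edges (K i))" if "i < n" for i
    using that by (auto intro: Max_ge)
  then have bounds:
    "\<forall>K'\<in>?\<K>. finite (verts K') \<and> card (verts K') \<le> (MAX i\<in>{..<n}. card (verts (K i)))"
    "\<forall>K'\<in>?\<K>. finite (edges K') \<and> card (edges K') \<le> (MAX i\<in>{..<n}. card (edges (K i)))"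
    using assms(2) unfolding finite_graph_def by auto
  note vertex = invariant_vertex_transversal[OF assms(1) bounds(1), unfolded vertex_hits]
    and edge = invariant_edge_transversal[OF assms(1) bounds(2), unfolded edge_hits]
  show ?thesis
    by (intro conjI allI impI; elim conjE; rule vertex edge)
qed

end
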